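(* Let $1\le r\le s$ and let $H$ be a fixed $s$-uniform hypergraph with at least $s$ vertices. Then $\tau^{(r)}(H)\ge n^{\,r-1/\mu^{(r)}(H)}$; that is, for every strategy and every $t=t(n)=o(n^{\,r-1/\mu^{(r)}(H)})$, a.a.s. $G^{(r,s)}_t$ does not contain a copy of $H$.
   Context: Semi-random hypergraph process: fix integers $1\le r\le s$ and $n\ge s$. Start with the empty $s$-uniform multi-hypergraph $G_0^{(r,s)}$ on vertex set $[n]$. In each step $t\ge1$, a set $U_t$ of $r$ vertices is chosen uniformly at random among all $r$-subsets of $[n]$, independently of all previous choices; the player then chooses a set $V_t$ of $s-r$ vertices of $[n]\setminus U_t$ (when $r=s$, $V_t=\emptyset$), and the edge $U_t\cup V_t$ is added to form $G^{(r,s)}_t$ (parallel edges allowed). A strategy is, for each $n$, a sequence of functions determining $V_t$ from $(U_1,V_1,\dots,U_{t-1},V_{t-1},U_t)$. A.a.s. means with probability tending to $1$ as $n\to\infty$. "Contains $H$" means has a sub-hypergraph isomorphic to $H$. "$\tau^{(r)}(H)\ge f$" means for every strategy and every $t=o(f(n))$, a.a.s. $G^{(r,s)}_t$ does not contain $H$. For an $s$-graph $H$ write $v_H=|V(H)|$, $e_H=|E(H)|$, $f^{(r)}(H)=\frac{e_H}{v_H-s+r}$ and $\mu^{(r)}(H)=\max\{f^{(r)}(H'):\ H'\subseteq H,\ v_{H'}\ge s\}$, the maximum over sub-hypergraphs $H'$ of $H$ with at least $s$ vertices. *)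

theory Defs
  imports "HOL-Probability.Probability" "HOL-Library.Landau_Symbols"
begin

definition r_sets :: "nat \<Rightarrow> nat \<Rightarrow> nat set set" where
  "r_sets n r = {U. U \<subseteq> {..<n} \<and> card U = r}"

text \<open>A history is the list of pairs (U_1,V_1),...,(U_t,V_t).\<close>
type_synonym history = "(nat set \<times> nat set) list"

text \<open>A strategy: for each n, a function of the history and the new random set U_t, giving V_t.\<close>
type_synonym strategy = "nat \<Rightarrow> history \<Rightarrow> nat set \<Rightarrow> nat set"

definition valid_strategy :: "nat \<Rightarrow> nat \<Rightarrow> strategy \<Rightarrow> bool" where
  "valid_strategy r s St \<longleftrightarrow>
     (\<forall>n\<ge>s. \<forall>h U. U \<in> r_sets n r \<longrightarrow>
        St n h U \<subseteq> {..<n} - U \<and> card (St n h U) = s - r)"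

fun semi_random_history :: "nat \<Rightarrow> strategy \<Rightarrow> nat \<Rightarrow> nat \<Rightarrow> history pmf" where
  "semi_random_history r St n 0 = return_pmf []"
| "semi_random_history r St n (Suc t) =
     bind_pmf (semi_random_history r St n t)
       (\<lambda>h. map_pmf (\<lambda>U. h @ [(U, St n h U)]) (pmf_of_set (r_sets n r)))"

text \<open>The edge multiset (as a list) of G_t.\<close>
definition edges_of :: "history \<Rightarrow> nat set list" where
  "edges_of h = map (\<lambda>(U, V). U \<union> V) h"

definition contains_copy :: "nat \<Rightarrow> nat set list \<Rightarrow> 'a set \<Rightarrow> 'a set set \<Rightarrow> bool" where
  "contains_copy n G VH EH \<longleftrightarrow>
     (\<exists>\<phi>. inj_on \<phi> VH \<and> \<phi> ` VH \<subseteq> {..<n} \<and> (\<forall>e\<in>EH. \<phi> ` e \<in> set G))"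

definition f_r :: "nat \<Rightarrow> nat \<Rightarrow> 'a set \<Rightarrow> 'a set set \<Rightarrow> real" where
  "f_r r s VH EH = real (card EH) / (real (card VH) - real s + real r)"

definition mu_r :: "nat \<Rightarrow> nat \<Rightarrow> 'a set \<Rightarrow> 'a set set \<Rightarrow> real" where
  "mu_r r s VH EH = Max {f_r r s V' E' | V' E'.
      V' \<subseteq> VH \<and> E' \<subseteq> EH \<and> (\<forall>e\<in>E'. e \<subseteq> V') \<and> card V' \<ge> s}"

end

theory Submission
  imports Defs
begin

text \<open>
  Let \<open>H'\<close> be a densest sub-hypergraph of \<open>H\<close>, with \<open>m\<close> edges and \<open>v\<close> vertices, so
  \<open>\<mu> = m / (v - s + r)\<close>. Give each set \<open>I\<close> of \<open>m\<close> steps the weight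
  \<open>prod_{i in I} sum_{B <= U_i \<inter> A_i} n^|B|\<close>, where \<open>A_i\<close> is the union of the edges of the
  earlier steps of \<open>I\<close>, and let the potential \<open>Z\<close> be the total weight. A uniformly random
  \<open>r\<close>-set contains a fixed \<open>B\<close> with probability at most \<open>(2r/n)^|B|\<close>, so whatever the
  player does each step adds at most a constant multiple of the previous potential of one
  size less, and \<open>E Z <= C t^m\<close>. A copy of \<open>H'\<close> on the steps \<open>I\<close> covers only \<open>v\<close> vertices,
  so the sets \<open>U_i\<close> meet the \<open>A_i\<close> in at least \<open>m r - (v - s + r)\<close> vertices in total, forcing
  \<open>Z >= n^(m (r - 1/\<mu>))\<close>. Markov's inequality bounds the probability of a copy by
  \<open>O((t / n^(r - 1/\<mu>))^m)\<close>.
\<close>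

lemma binomial_diff_mult_prod:
  assumes "b \<le> r" "r \<le> n"
  shows "real ((n - b) choose (r - b)) * (\<Prod>i<b. real (n - i))
       = real (n choose r) * (\<Prod>i<b. real (r - i))"
  using assms(1)
proof (induction b)
  case 0
  then show ?case by simp
next
  case (Suc b)
  have "n - b = Suc (n - Suc b)" "r - b = Suc (r - Suc b)"
    using Suc.prems assms by auto
  then have pascal: "real (n - b) * real ((n - Suc b) choose (r - Suc b))
      = real (r - b) * real ((n - b) choose (r - b))"
    by (metis Suc_times_binomial of_nat_mult)
  have "real ((n - Suc b) choose (r - Suc b)) * (\<Prod>i<Suc b. real (n - i))
      = real (n - b) * real ((n - Suc b) choose (r - Suc b)) * (\<Prod>i<b. real (n - i))"
    by (simp add: lessThan_Suc mult_ac)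
  also have "\<dots> = real (r - b) * (real ((n - b) choose (r - b)) * (\<Prod>i<b. real (n - i)))"
    by (simp add: pascal mult_ac)
  also have "\<dots> = real (n choose r) * (\<Prod>i<Suc b. real (r - i))"
    using Suc by (simp add: lessThan_Suc mult_ac)
  finally show ?case
    by simp
qed

lemma binomial_diff_le:
  assumes "b \<le> r" "2 * r \<le> n"
  shows "real n ^ b * real ((n - b) choose (r - b)) \<le> real (2 * r) ^ b * real (n choose r)"
proof -
  have "(\<Prod>i<b. real n / 2) \<le> (\<Prod>i<b. real (n - i))"
    by (intro prod_mono) (use assms in auto)
  then have low: "(real n / 2) ^ b \<le> (\<Prod>i<b. real (n - i))"
    by simp
  have "(\<Prod>i<b. real (r - i)) \<le> (\<Prod>i<b. real r)"
    by (intro prod_mono) auto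
  then have up: "(\<Prod>i<b. real (r - i)) \<le> real r ^ b"
    by simp
  have "real ((n - b) choose (r - b)) * (real n / 2) ^ b
      \<le> real ((n - b) choose (r - b)) * (\<Prod>i<b. real (n - i))"
    by (intro mult_left_mono low) auto
  also have "\<dots> = real (n choose r) * (\<Prod>i<b. real (r - i))"
    using binomial_diff_mult_prod assms by simp
  also have "\<dots> \<le> real (n choose r) * real r ^ b"
    by (intro mult_left_mono up) auto
  finally have "2 ^ b * (real ((n - b) choose (r - b)) * (real n / 2) ^ b)
      \<le> 2 ^ b * (real (n choose r) * real r ^ b)"
    by (intro mult_left_mono) auto
  then show ?thesis
    by (simp add: power_divide power_mult_distrib mult_ac)
qed

lemma measure_pmf_Markov_inequality:
  assumes "(\<integral>\<^sup>+x. ennreal (f x) \<partial>measure_pmf p) \<le> ennreal B"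
    and "0 < c" "0 \<le> B" "\<And>x. 0 \<le> f x"
  shows "measure_pmf.prob p {x. c \<le> f x} \<le> B / c"
proof -
  have "emeasure (measure_pmf p) {x. c \<le> f x} = (\<integral>\<^sup>+x. indicator {x. c \<le> f x} x \<partial>measure_pmf p)"
    by simp
  also have "\<dots> \<le> (\<integral>\<^sup>+x. ennreal (1 / c) * ennreal (f x) \<partial>measure_pmf p)"
    using assms(2,4)
    by (intro nn_integral_mono)
       (auto split: split_indicator simp flip: ennreal_mult'' intro!: ennreal_leI simp: field_simps)
  also have "\<dots> = ennreal (1 / c) * (\<integral>\<^sup>+x. ennreal (f x) \<partial>measure_pmf p)"
    by (rule nn_integral_cmult) simp
  also have "\<dots> \<le> ennreal (1 / c) * ennreal B"
    by (intro mult_left_mono assms(1)) simp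
  also have "\<dots> = ennreal (B / c)"
    using assms(2,3) by (simp flip: ennreal_mult'')
  finally show ?thesis
    using assms(2,3) by (simp add: measure_pmf.emeasure_eq_measure)
qed


lemma finite_r_sets: "finite (r_sets n r)"
  unfolding r_sets_def by (rule finite_subset[of _ "Pow {..<n}"]) auto

lemma card_r_sets: "card (r_sets n r) = n choose r"
  unfolding r_sets_def using n_subsets[of "{..<n}" r] by simp

lemma r_sets_nonempty: "r \<le> n \<Longrightarrow> r_sets n r \<noteq> {}"
  unfolding r_sets_def by (auto intro!: exI[of _ "{..<r}"])

lemma card_r_sets_supersets_le:
  assumes "B \<subseteq> {..<n}"
  shows "card {U \<in> r_sets n r. B \<subseteq> U} \<le> (n - card B) choose (r - card B)"
proof -
  have fin: "finite B"
    using assms finite_subset by blast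
  have "card {U \<in> r_sets n r. B \<subseteq> U} \<le> card {W. W \<subseteq> {..<n} - B \<and> card W = r - card B}"
  proof (rule card_inj_on_le[where f = "\<lambda>U. U - B"])
    show "inj_on (\<lambda>U. U - B) {U \<in> r_sets n r. B \<subseteq> U}"
      by (auto simp: inj_on_def)
    show "(\<lambda>U. U - B) ` {U \<in> r_sets n r. B \<subseteq> U} \<subseteq> {W. W \<subseteq> {..<n} - B \<and> card W = r - card B}"
      using fin by (auto simp: r_sets_def card_Diff_subset)
  qed auto
  also have "\<dots> = (n - card B) choose (r - card B)"
    using n_subsets[of "{..<n} - B"] assms fin by (simp add: card_Diff_subset)
  finally show ?thesis .
qed

definition trace_weight :: "nat \<Rightarrow> nat set \<Rightarrow> nat set \<Rightarrow> real" where
  "trace_weight n U A = (\<Sum>B\<in>Pow (U \<inter> A). real n ^ card B)"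

lemma trace_weight_nonneg: "0 \<le> trace_weight n U A"
  unfolding trace_weight_def by (intro sum_nonneg) auto

lemma power_card_Int_le_trace_weight: "finite U \<Longrightarrow> real n ^ card (U \<inter> A) \<le> trace_weight n U A"
  unfolding trace_weight_def by (rule member_le_sum[where i = "U \<inter> A"]) auto

text \<open>Summing over all \<open>r\<close>-sets: at most \<open>(2r/n)^|B| * (n choose r)\<close> of them contain \<open>B\<close>.\<close>
lemma sum_trace_weight_le:
  assumes "finite A" "card A \<le> M" "2 * r \<le> n"
  shows "(\<Sum>U\<in>r_sets n r. trace_weight n U A) \<le> 2 ^ M * real (2 * r) ^ r * real (n choose r)"
proof -
  have "(\<Sum>U\<in>r_sets n r. trace_weight n U A)
      = (\<Sum>U\<in>r_sets n r. \<Sum>B\<in>{B \<in> Pow A. B \<subseteq> U}. real n ^ card B)"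
    unfolding trace_weight_def by (intro sum.cong refl) auto
  also have "\<dots> = (\<Sum>B\<in>Pow A. \<Sum>U\<in>{U \<in> r_sets n r. B \<subseteq> U}. real n ^ card B)"
    by (rule sum.swap_restrict) (use assms finite_r_sets in auto)
  also have "\<dots> = (\<Sum>B\<in>Pow A. real n ^ card B * real (card {U \<in> r_sets n r. B \<subseteq> U}))"
    by (simp add: mult.commute)
  also have "\<dots> \<le> (\<Sum>B\<in>Pow A. real (2 * r) ^ r * real (n choose r))"
  proof (rule sum_mono)
    fix B
    show "real n ^ card B * real (card {U \<in> r_sets n r. B \<subseteq> U}) \<le> real (2 * r) ^ r * real (n choose r)"
    proof (cases "B \<subseteq> {..<n} \<and> card B \<le> r")
      case True
      have "real n ^ card B * real (card {U \<in> r_sets n r. B \<subseteq> U})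
          \<le> real n ^ card B * real ((n - card B) choose (r - card B))"
        by (intro mult_left_mono) (use card_r_sets_supersets_le True in auto)
      also have "\<dots> \<le> real (2 * r) ^ card B * real (n choose r)"
        using binomial_diff_le True assms by auto
      also have "\<dots> \<le> real (2 * r) ^ r * real (n choose r)"
        using True by (cases "r = 0") (auto intro!: mult_right_mono power_increasing simp del: of_nat_mult)
      finally show ?thesis .
    next
      case False
      have "{U \<in> r_sets n r. B \<subseteq> U} = {}"
        using False by (force simp: r_sets_def dest: card_mono[rotated] finite_subset)
      then show ?thesis
        by (simp only: card.empty) simp
    qed
  qed
  also have "\<dots> \<le> 2 ^ M * (real (2 * r) ^ r * real (n choose r))"
    using assms by (simp add: card_Pow mult_right_mono)
  finally show ?thesis
    by (simp add: mult_ac)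
qed


definition step_edge :: "history \<Rightarrow> nat \<Rightarrow> nat set" where
  "step_edge h i = fst (h ! i) \<union> snd (h ! i)"

definition earlier_edges :: "history \<Rightarrow> nat set \<Rightarrow> nat \<Rightarrow> nat set" where
  "earlier_edges h I i = (\<Union>l\<in>{l \<in> I. l < i}. step_edge h l)"

definition index_weight :: "nat \<Rightarrow> history \<Rightarrow> nat set \<Rightarrow> real" where
  "index_weight n h I = (\<Prod>i\<in>I. trace_weight n (fst (h ! i)) (earlier_edges h I i))"

definition index_sets :: "nat \<Rightarrow> nat \<Rightarrow> nat set set" where
  "index_sets t k = {I. I \<subseteq> {..<t} \<and> card I = k}"

definition potential :: "nat \<Rightarrow> nat \<Rightarrow> history \<Rightarrow> real" where
  "potential n k h = (\<Sum>I\<in>index_sets (length h) k. index_weight n h I)"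

lemma finite_index_sets: "finite (index_sets t k)"
  unfolding index_sets_def by (rule finite_subset[of _ "Pow {..<t}"]) auto

lemma index_weight_nonneg: "0 \<le> index_weight n h I"
  unfolding index_weight_def by (intro prod_nonneg) (auto intro: trace_weight_nonneg)

lemma potential_nonneg: "0 \<le> potential n k h"
  unfolding potential_def by (intro sum_nonneg) (auto intro: index_weight_nonneg)

lemma potential_0: "potential n 0 h = 1"
proof -
  have "index_sets (length h) 0 = {{}}"
    unfolding index_sets_def by (auto dest: finite_subset[OF _ finite_lessThan])
  then show ?thesis
    by (simp add: potential_def index_weight_def)
qed

lemma potential_Nil: "potential n (Suc k) [] = 0"
proof -
  have "index_sets 0 (Suc k) = {}"
    unfolding index_sets_def by auto
  then show ?thesis
    by (simp add: potential_def)
qed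

lemma index_sets_Suc:
  "index_sets (Suc t) (Suc k) = index_sets t (Suc k) \<union> insert t ` index_sets t k"
proof (intro equalityI subsetI)
  fix I
  assume I: "I \<in> index_sets (Suc t) (Suc k)"
  then have "finite I"
    unfolding index_sets_def by (auto intro: finite_subset)
  show "I \<in> index_sets t (Suc k) \<union> insert t ` index_sets t k"
  proof (cases "t \<in> I")
    case True
    then have "I - {t} \<in> index_sets t k" "I = insert t (I - {t})"
      using I \<open>finite I\<close> unfolding index_sets_def by auto
    then show ?thesis
      by blast
  next
    case False
    then show ?thesis
      using I unfolding index_sets_def by (auto simp: less_Suc_eq)
  qed
next
  fix I
  assume "I \<in> index_sets t (Suc k) \<union> insert t ` index_sets t k"
  then show "I \<in> index_sets (Suc t) (Suc k)"
  proof
    assume "I \<in> insert t ` index_sets t k"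
    then obtain J where "J \<in> index_sets t k" "I = insert t J"
      by blast
    moreover have "finite J" "t \<notin> J"
      using calculation(1) unfolding index_sets_def by (auto intro: finite_subset)
    ultimately show ?thesis
      unfolding index_sets_def by auto
  qed (auto simp: index_sets_def)
qed

lemma step_edge_append: "l < length h \<Longrightarrow> step_edge (h @ [x]) l = step_edge h l"
  by (simp add: step_edge_def nth_append)

lemma index_weight_append:
  assumes "I \<subseteq> {..<length h}"
  shows "index_weight n (h @ [x]) I = index_weight n h I"
proof -
  have "earlier_edges (h @ [x]) I i = earlier_edges h I i" for i
    unfolding earlier_edges_def using assms step_edge_append[of _ h x] by (intro SUP_cong) auto
  then show ?thesis
    unfolding index_weight_def using assms by (intro prod.cong refl) (auto simp: nth_append)
qed

lemma index_weight_append_insert: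
  assumes "J \<subseteq> {..<length h}"
  shows "index_weight n (h @ [x]) (insert (length h) J)
       = index_weight n h J * trace_weight n (fst x) (\<Union>l\<in>J. step_edge h l)"
proof -
  let ?t = "length h"
  have "finite J" "?t \<notin> J"
    using assms finite_subset by auto
  have last: "earlier_edges (h @ [x]) (insert ?t J) ?t = (\<Union>l\<in>J. step_edge h l)"
    unfolding earlier_edges_def using assms step_edge_append[of _ h x] by auto
  have "earlier_edges (h @ [x]) (insert ?t J) i = earlier_edges h J i" if "i \<in> J" for i
    unfolding earlier_edges_def using assms step_edge_append[of _ h x] that
    by (intro SUP_cong) auto
  then have "(\<Prod>i\<in>J. trace_weight n (fst ((h @ [x]) ! i)) (earlier_edges (h @ [x]) (insert ?t J) i))
       = index_weight n h J"
    unfolding index_weight_def using assms by (intro prod.cong refl) (auto simp: nth_append)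
  then show ?thesis
    unfolding index_weight_def using \<open>finite J\<close> \<open>?t \<notin> J\<close> last
    by (simp add: mult.commute)
qed

lemma potential_append:
  "potential n (Suc k) (h @ [x]) = potential n (Suc k) h
     + (\<Sum>J\<in>index_sets (length h) k. index_weight n h J * trace_weight n (fst x) (\<Union>l\<in>J. step_edge h l))"
proof -
  let ?t = "length h"
  have disj: "index_sets ?t (Suc k) \<inter> insert ?t ` index_sets ?t k = {}"
    unfolding index_sets_def by auto
  have inj: "inj_on (insert ?t) (index_sets ?t k)"
  proof (rule inj_onI)
    fix I J
    assume "I \<in> index_sets ?t k" "J \<in> index_sets ?t k" "insert ?t I = insert ?t J"
    moreover have "?t \<notin> I" "?t \<notin> J"
      using calculation unfolding index_sets_def by auto
    ultimately show "I = J"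
      by (metis insert_ident)
  qed
  have "potential n (Suc k) (h @ [x])
      = (\<Sum>I\<in>index_sets ?t (Suc k). index_weight n (h @ [x]) I)
        + (\<Sum>I\<in>insert ?t ` index_sets ?t k. index_weight n (h @ [x]) I)"
    unfolding potential_def
    by (simp add: index_sets_Suc sum.union_disjoint finite_index_sets disj)
  also have "(\<Sum>I\<in>index_sets ?t (Suc k). index_weight n (h @ [x]) I) = potential n (Suc k) h"
    unfolding potential_def by (intro sum.cong refl index_weight_append) (auto simp: index_sets_def)
  also have "(\<Sum>I\<in>insert ?t ` index_sets ?t k. index_weight n (h @ [x]) I)
      = (\<Sum>J\<in>index_sets ?t k. index_weight n h J * trace_weight n (fst x) (\<Union>l\<in>J. step_edge h l))"
    unfolding sum.reindex[OF inj] comp_def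
    by (intro sum.cong refl index_weight_append_insert) (auto simp: index_sets_def)
  finally show ?thesis .
qed


definition wf_history :: "nat \<Rightarrow> nat \<Rightarrow> nat \<Rightarrow> history \<Rightarrow> bool" where
  "wf_history n r s h \<longleftrightarrow>
     (\<forall>x\<in>set h. fst x \<in> r_sets n r \<and> snd x \<subseteq> {..<n} - fst x \<and> card (snd x) = s - r)"

lemma set_pmf_semi_random_history:
  assumes "valid_strategy r s St" "s \<le> n" "r \<le> n"
    and "h \<in> set_pmf (semi_random_history r St n t)"
  shows "length h = t \<and> wf_history n r s h"
  using assms(4)
proof (induction t arbitrary: h)
  case 0
  then show ?case
    by (simp add: wf_history_def)
next
  case (Suc t)
  then obtain h' U where h': "h' \<in> set_pmf (semi_random_history r St n t)"
    and U: "U \<in> r_sets n r" and h: "h = h' @ [(U, St n h' U)]"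
    using r_sets_nonempty[OF assms(3)] finite_r_sets by auto
  have "St n h' U \<subseteq> {..<n} - U \<and> card (St n h' U) = s - r"
    using assms(1,2) U unfolding valid_strategy_def by blast
  with Suc.IH[OF h'] U show ?case
    unfolding h wf_history_def by auto
qed

lemma wf_history_nth:
  assumes "wf_history n r s h" "i < length h"
  shows "finite (fst (h ! i))" "card (fst (h ! i)) = r" "finite (snd (h ! i))"
    "fst (h ! i) \<inter> snd (h ! i) = {}" "card (snd (h ! i)) = s - r"
proof -
  have "fst (h ! i) \<in> r_sets n r" "snd (h ! i) \<subseteq> {..<n} - fst (h ! i)" "card (snd (h ! i)) = s - r"
    using assms nth_mem[OF assms(2)] unfolding wf_history_def by blast+
  then show "finite (fst (h ! i))" "card (fst (h ! i)) = r" "finite (snd (h ! i))"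
    "fst (h ! i) \<inter> snd (h ! i) = {}" "card (snd (h ! i)) = s - r"
    unfolding r_sets_def by (auto intro: finite_subset)
qed

lemma finite_step_edge:
  "wf_history n r s h \<Longrightarrow> l < length h \<Longrightarrow> finite (step_edge h l)"
  using wf_history_nth[of n r s h l] by (simp add: step_edge_def)

lemma card_step_edge_le:
  assumes "wf_history n r s h" "l < length h" "r \<le> s"
  shows "card (step_edge h l) \<le> s"
  using card_Un_le[of "fst (h ! l)" "snd (h ! l)"] wf_history_nth[OF assms(1,2)] assms(3)
  by (simp add: step_edge_def)

definition step_factor :: "nat \<Rightarrow> nat \<Rightarrow> nat \<Rightarrow> real" where
  "step_factor m r s = 2 ^ (m * s) * real (2 * r) ^ r"

lemma step_factor_nonneg: "0 \<le> step_factor m r s"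
  by (simp add: step_factor_def)

text \<open>The player's choice \<open>St n h U\<close> does not enter: the new factor only depends on \<open>U\<close>.\<close>
lemma sum_potential_append_le:
  assumes "wf_history n r s h" "r \<le> s" "k < m" "2 * r \<le> n"
  shows "(\<Sum>U\<in>r_sets n r. potential n (Suc k) (h @ [(U, St n h U)]))
       \<le> real (card (r_sets n r)) * (potential n (Suc k) h + step_factor m r s * potential n k h)"
proof -
  let ?R = "r_sets n r"
  let ?E = "\<lambda>J. \<Union>l\<in>J. step_edge h l"
  have bound: "(\<Sum>U\<in>?R. trace_weight n U (?E J)) \<le> step_factor m r s * real (card ?R)"
    if "J \<in> index_sets (length h) k" for J
  proof -
    have J: "J \<subseteq> {..<length h}" "card J = k" "finite J"
      using that unfolding index_sets_def by (auto intro: finite_subset)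
    have "card (?E J) \<le> (\<Sum>l\<in>J. card (step_edge h l))"
      using J by (intro card_UN_le) simp
    also have "\<dots> \<le> k * s"
      using sum_mono[of J "\<lambda>l. card (step_edge h l)" "\<lambda>_. s"] card_step_edge_le[OF assms(1) _ assms(2)] J
      by auto
    also have "\<dots> \<le> m * s"
      using assms(3) by simp
    finally have "card (?E J) \<le> m * s" .
    moreover have "finite (?E J)"
      using finite_step_edge[OF assms(1)] J by auto
    ultimately show ?thesis
      using sum_trace_weight_le[OF _ _ assms(4)] by (simp add: step_factor_def card_r_sets)
  qed
  have "(\<Sum>U\<in>?R. potential n (Suc k) (h @ [(U, St n h U)]))
      = real (card ?R) * potential n (Suc k) h
        + (\<Sum>J\<in>index_sets (length h) k. index_weight n h J * (\<Sum>U\<in>?R. trace_weight n U (?E J)))"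
    by (simp add: potential_append sum.distrib sum_distrib_left sum.swap[of _ ?R])
  also have "\<dots> \<le> real (card ?R) * potential n (Suc k) h
        + (\<Sum>J\<in>index_sets (length h) k. index_weight n h J * (step_factor m r s * real (card ?R)))"
    by (intro add_left_mono sum_mono mult_left_mono bound index_weight_nonneg)
  also have "\<dots> = real (card ?R) * (potential n (Suc k) h + step_factor m r s * potential n k h)"
    unfolding potential_def by (simp add: algebra_simps sum_distrib_left sum_distrib_right)
  finally show ?thesis .
qed

lemma nn_integral_potential_append_le:
  assumes "wf_history n r s h" "r \<le> s" "k < m" "2 * r \<le> n"
  shows "(\<integral>\<^sup>+U. ennreal (potential n (Suc k) (h @ [(U, St n h U)])) \<partial>measure_pmf (pmf_of_set (r_sets n r)))
       \<le> ennreal (potential n (Suc k) h) + ennreal (step_factor m r s) * ennreal (potential n k h)"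
proof -
  let ?R = "r_sets n r"
  let ?S = "\<Sum>U\<in>?R. potential n (Suc k) (h @ [(U, St n h U)])"
  have "0 < card ?R"
    using r_sets_nonempty[of r n] assms finite_r_sets card_gt_0_iff by auto
  have "(\<integral>\<^sup>+U. ennreal (potential n (Suc k) (h @ [(U, St n h U)])) \<partial>measure_pmf (pmf_of_set ?R))
      = (\<Sum>U\<in>?R. ennreal (potential n (Suc k) (h @ [(U, St n h U)]))) / of_nat (card ?R)"
    using \<open>0 < card ?R\<close> finite_r_sets by (intro nn_integral_pmf_of_set) auto
  also have "\<dots> = ennreal (?S / real (card ?R))"
    using \<open>0 < card ?R\<close>
    by (simp add: potential_nonneg sum_nonneg divide_ennreal ennreal_of_nat_eq_real_of_nat)
  also have "\<dots> \<le> ennreal (potential n (Suc k) h + step_factor m r s * potential n k h)"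
    using sum_potential_append_le[OF assms] \<open>0 < card ?R\<close>
    by (intro ennreal_leI) (simp add: divide_le_eq mult.commute)
  also have "\<dots> = ennreal (potential n (Suc k) h) + ennreal (step_factor m r s) * ennreal (potential n k h)"
    by (simp add: potential_nonneg step_factor_nonneg ennreal_mult ennreal_plus)
  finally show ?thesis .
qed

lemma nn_integral_potential_le:
  assumes "valid_strategy r s St" "r \<le> s" "s \<le> n" "2 * r \<le> n" "j \<le> m"
  shows "(\<integral>\<^sup>+h. ennreal (potential n j h) \<partial>measure_pmf (semi_random_history r St n t))
       \<le> ennreal (real (t choose j) * step_factor m r s ^ j)"
  using assms(5)
proof (induction t arbitrary: j)
  case 0
  then show ?case
    by (cases j) (auto simp: potential_0 potential_Nil)
next
  case (Suc t)
  let ?H = "semi_random_history r St n t"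
  let ?C = "step_factor m r s"
  show ?case
  proof (cases j)
    case 0
    then show ?thesis
      by (simp add: potential_0 measure_pmf.emeasure_space_1)
  next
    case (Suc k)
    have "(\<integral>\<^sup>+h. ennreal (potential n j h) \<partial>measure_pmf (semi_random_history r St n (Suc t)))
        = (\<integral>\<^sup>+h. (\<integral>\<^sup>+U. ennreal (potential n (Suc k) (h @ [(U, St n h U)]))
              \<partial>measure_pmf (pmf_of_set (r_sets n r))) \<partial>measure_pmf ?H)"
      by (simp add: Suc)
    also have "\<dots> \<le> (\<integral>\<^sup>+h. ennreal (potential n (Suc k) h) + ennreal ?C * ennreal (potential n k h) \<partial>measure_pmf ?H)"
      using set_pmf_semi_random_history[OF assms(1,3)] assms(2,3,4) Suc.prems Suc
      by (intro nn_integral_mono_AE)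
         (auto simp: AE_measure_pmf_iff intro!: nn_integral_potential_append_le)
    also have "\<dots> = (\<integral>\<^sup>+h. ennreal (potential n (Suc k) h) \<partial>measure_pmf ?H)
                   + ennreal ?C * (\<integral>\<^sup>+h. ennreal (potential n k h) \<partial>measure_pmf ?H)"
      by (simp add: nn_integral_add nn_integral_cmult)
    also have "\<dots> \<le> ennreal (real (t choose Suc k) * ?C ^ Suc k) + ennreal ?C * ennreal (real (t choose k) * ?C ^ k)"
      using Suc.prems Suc by (intro add_mono mult_left_mono Suc.IH) auto
    also have "\<dots> = ennreal (real (Suc t choose j) * ?C ^ j)"
      using step_factor_nonneg[of m r s] by (simp add: Suc ennreal_mult[symmetric] algebra_simps)
    finally show ?thesis .
  qed
qed


lemma copy_index_set:
  assumes "contains_copy n (edges_of h) V E" "\<forall>e\<in>E. e \<subseteq> V"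
  obtains I W where "I \<in> index_sets (length h) (card E)" "finite W" "card W = card V"
    "\<forall>i\<in>I. step_edge h i \<subseteq> W"
proof -
  obtain \<phi> where inj: "inj_on \<phi> V" and range: "\<phi> ` V \<subseteq> {..<n}"
    and edges: "\<forall>e\<in>E. \<phi> ` e \<in> set (edges_of h)"
    using assms(1) unfolding contains_copy_def by blast
  have "\<exists>i. i < length h \<and> step_edge h i = \<phi> ` e" if "e \<in> E" for e
  proof -
    have "\<phi> ` e \<in> set (edges_of h)"
      using edges that by blast
    then obtain i where "i < length (edges_of h)" "edges_of h ! i = \<phi> ` e"
      by (auto simp: in_set_conv_nth)
    then show ?thesis
      by (intro exI[of _ i]) (auto simp: edges_of_def step_edge_def split: prod.splits)
  qed
  then obtain idx where idx: "\<And>e. e \<in> E \<Longrightarrow> idx e < length h \<and> step_edge h (idx e) = \<phi> ` e"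
    by metis
  have "inj_on idx E"
  proof (rule inj_onI)
    fix e e'
    assume "e \<in> E" "e' \<in> E" "idx e = idx e'"
    then have "\<phi> ` e = \<phi> ` e'"
      using idx by metis
    then show "e = e'"
      using inj_on_image_eq_iff[OF inj] assms(2) \<open>e \<in> E\<close> \<open>e' \<in> E\<close> by blast
  qed
  then have "idx ` E \<in> index_sets (length h) (card E)"
    using idx unfolding index_sets_def by (auto simp: card_image)
  moreover have "\<forall>i\<in>idx ` E. step_edge h i \<subseteq> \<phi> ` V"
    using idx assms(2) by (simp add: image_mono)
  moreover have "finite (\<phi> ` V)" "card (\<phi> ` V) = card V"
    using range card_image[OF inj] finite_subset by auto
  ultimately show ?thesis
    using that by blast
qed

text \<open>The parts \<open>U\<^sub>i - A\<^sub>i\<close> of the random sets not covered by earlier edges are pairwise disjoint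
  and disjoint from the player's set of the first step, and all lie in \<open>W\<close>.\<close>
lemma card_index_set_le:
  assumes wf: "wf_history n r s h" and I: "I \<subseteq> {..<length h}" "I \<noteq> {}"
    and W: "finite W" "\<forall>i\<in>I. step_edge h i \<subseteq> W"
  shows "card I * r + (s - r) \<le> (\<Sum>i\<in>I. card (fst (h ! i) \<inter> earlier_edges h I i)) + card W"
proof -
  define U where "U i = fst (h ! i)" for i
  define V where "V i = snd (h ! i)" for i
  define A where "A i = earlier_edges h I i" for i
  define new where "new i = U i - A i" for i
  have "finite I"
    using I finite_subset by blast
  have props: "finite (U i)" "card (U i) = r" "finite (V i)" "U i \<inter> V i = {}" "card (V i) = s - r"
    if "i \<in> I" for i
    using wf_history_nth[OF wf, of i] that I unfolding U_def V_def by auto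
  have edge: "step_edge h i = U i \<union> V i" for i
    unfolding step_edge_def U_def V_def ..
  have earlier: "step_edge h i \<subseteq> A j" if "i \<in> I" "i < j" for i j
    using that unfolding A_def earlier_edges_def by auto
  define i0 where "i0 = Min I"
  have i0: "i0 \<in> I" "\<And>i. i \<in> I \<Longrightarrow> i0 \<le> i"
    unfolding i0_def using \<open>finite I\<close> I(2) by auto
  have "new i \<inter> new j = {}" if "i \<in> I" "i < j" for i j
    using earlier[OF that] edge unfolding new_def by auto
  then have disj: "new i \<inter> new j = {}" if "i \<in> I" "j \<in> I" "i \<noteq> j" for i j
    using that by (metis Int_commute linorder_neqE_nat)
  have disj0: "V i0 \<inter> (\<Union>i\<in>I. new i) = {}"
  proof -
    have "V i0 \<inter> new i = {}" if "i \<in> I" for i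
    proof (cases "i = i0")
      case True
      then show ?thesis
        using props(4)[OF that] unfolding new_def by auto
    next
      case False
      then have "i0 < i"
        using i0(2)[OF that] by linarith
      then show ?thesis
        using earlier[OF i0(1)] edge unfolding new_def by auto
    qed
    then show ?thesis
      by blast
  qed
  have "card (V i0) + (\<Sum>i\<in>I. card (new i)) = card (V i0 \<union> (\<Union>i\<in>I. new i))"
    using props disj disj0 \<open>finite I\<close> i0 unfolding new_def
    by (subst card_Un_disjoint) (auto simp: card_UN_disjoint)
  also have "\<dots> \<le> card W"
    using W i0(1) edge by (intro card_mono) (auto simp: new_def)
  finally have count_new: "card (V i0) + (\<Sum>i\<in>I. card (new i)) \<le> card W" .
  have "(\<Sum>i\<in>I. card (U i \<inter> A i)) + (\<Sum>i\<in>I. card (new i)) = (\<Sum>i\<in>I. r)"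
    unfolding sum.distrib[symmetric] new_def
    by (intro sum.cong refl) (use props in \<open>auto simp: card_Int_Diff[symmetric]\<close>)
  then show ?thesis
    using count_new props(5)[OF i0(1)] unfolding U_def A_def by simp
qed

lemma power_le_potential:
  assumes "wf_history n r s h" "I \<in> index_sets (length h) k"
  shows "real n ^ (\<Sum>i\<in>I. card (fst (h ! i) \<inter> earlier_edges h I i)) \<le> potential n k h"
proof -
  have "finite (fst (h ! i))" if "i \<in> I" for i
    using wf_history_nth(1)[OF assms(1)] assms(2) that unfolding index_sets_def by auto
  then have "real n ^ (\<Sum>i\<in>I. card (fst (h ! i) \<inter> earlier_edges h I i))
      \<le> (\<Prod>i\<in>I. trace_weight n (fst (h ! i)) (earlier_edges h I i))"
    unfolding power_sum by (intro prod_mono conjI power_card_Int_le_trace_weight) auto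
  also have "\<dots> \<le> potential n k h"
    unfolding potential_def index_weight_def
    by (rule member_le_sum[OF assms(2)]) (auto simp: index_weight_nonneg[unfolded index_weight_def] finite_index_sets)
  finally show ?thesis .
qed


lemma prob_contains_copy_le:
  assumes "valid_strategy r s St" "1 \<le> r" "r \<le> s" "s \<le> n" "2 * r \<le> n"
    and "finite V" "E \<noteq> {}" "\<forall>e\<in>E. e \<subseteq> V"
  shows "measure_pmf.prob (semi_random_history r St n t) {h. contains_copy n (edges_of h) V E}
       \<le> (step_factor (card E) r s * real t) ^ card E
         / real n powr (real (card E) * real r - (real (card V) - real s + real r))"
    (is "_ \<le> _ / real n powr ?K")
proof -
  let ?H = "semi_random_history r St n t"
  let ?m = "card E"
  let ?C = "step_factor ?m r s"
  have "finite E"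
    using assms(6,8) by (intro finite_subset[of E "Pow V"]) auto
  then have "0 < ?m"
    using assms(7) by (simp add: card_gt_0_iff)
  have "0 < real n"
    using assms(2,5) by simp
  have forced: "real n powr ?K \<le> potential n ?m h"
    if copy: "contains_copy n (edges_of h) V E" and h: "h \<in> set_pmf ?H" for h
  proof -
    have wf: "wf_history n r s h"
      using set_pmf_semi_random_history[OF assms(1,4) _ h] assms(3,4) by simp
    obtain I W where I: "I \<in> index_sets (length h) ?m" and W: "finite W" "card W = card V"
      "\<forall>i\<in>I. step_edge h i \<subseteq> W"
      using copy_index_set[OF copy assms(8)] by blast
    define \<Sigma> where "\<Sigma> = (\<Sum>i\<in>I. card (fst (h ! i) \<inter> earlier_edges h I i))"
    have "I \<noteq> {}"
      using I \<open>0 < ?m\<close> by (auto simp: index_sets_def)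
    then have "?m * r + (s - r) \<le> \<Sigma> + card V"
      using card_index_set_le[OF wf _ _ W(1,3)] I W(2)
      unfolding index_sets_def \<Sigma>_def by auto
    then have "?K \<le> real \<Sigma>"
      using assms(3) by (simp add: of_nat_diff flip: of_nat_mult of_nat_add)
    then have "real n powr ?K \<le> real n ^ \<Sigma>"
      using \<open>0 < real n\<close> assms(2,5) by (simp add: powr_realpow[symmetric] powr_mono)
    also have "\<dots> \<le> potential n ?m h"
      unfolding \<Sigma>_def by (rule power_le_potential[OF wf I])
    finally show ?thesis .
  qed
  have "measure_pmf.prob ?H {h. contains_copy n (edges_of h) V E}
      = measure_pmf.prob ?H ({h. contains_copy n (edges_of h) V E} \<inter> set_pmf ?H)"
    by (rule measure_Int_set_pmf[symmetric])
  also have "\<dots> \<le> measure_pmf.prob ?H {h. real n powr ?K \<le> potential n ?m h}"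
    using forced by (intro measure_pmf.finite_measure_mono) auto
  also have "\<dots> \<le> real (t choose ?m) * ?C ^ ?m / real n powr ?K"
    using nn_integral_potential_le[OF assms(1,3,4,5) order_refl] \<open>0 < real n\<close>
    by (intro measure_pmf_Markov_inequality) (auto simp: potential_nonneg step_factor_nonneg)
  also have "\<dots> \<le> real t ^ ?m * ?C ^ ?m / real n powr ?K"
  proof -
    have "t choose ?m \<le> t ^ ?m"
      by (cases "?m \<le> t") (auto simp: binomial_le_pow binomial_eq_0)
    then have "real (t choose ?m) \<le> real t ^ ?m"
      by (metis of_nat_le_iff of_nat_power)
    then show ?thesis
      by (intro divide_right_mono mult_right_mono) (auto simp: step_factor_nonneg)
  qed
  also have "\<dots> = (?C * real t) ^ ?m / real n powr ?K"
    by (simp add: power_mult_distrib mult.commute)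
  finally show ?thesis .
qed

lemma contains_copy_subgraph:
  assumes "contains_copy n G V E" "V' \<subseteq> V" "E' \<subseteq> E"
  shows "contains_copy n G V' E'"
  using assms unfolding contains_copy_def by (meson image_mono inj_on_subset order_trans subsetD)

lemma densest_subgraph:
  assumes "1 \<le> r" "finite V" "s \<le> card V" "\<forall>e\<in>E. e \<subseteq> V" "E \<noteq> {}"
  obtains V' E' where "V' \<subseteq> V" "E' \<subseteq> E" "E' \<noteq> {}" "\<forall>e\<in>E'. e \<subseteq> V'"
    "mu_r r s V E = f_r r s V' E'" "0 < mu_r r s V E"
proof -
  let ?S = "{f_r r s V' E' | V' E'. V' \<subseteq> V \<and> E' \<subseteq> E \<and> (\<forall>e\<in>E'. e \<subseteq> V') \<and> card V' \<ge> s}"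
  have "finite E"
    using assms(2,4) by (intro finite_subset[of E "Pow V"]) auto
  have "?S \<subseteq> (\<lambda>(V', E'). f_r r s V' E') ` (Pow V \<times> Pow E)"
    by auto
  then have "finite ?S"
    by (rule finite_subset) (use assms(2) \<open>finite E\<close> in auto)
  moreover have whole: "f_r r s V E \<in> ?S"
    using assms(3,4) by blast
  moreover have "mu_r r s V E = Max ?S"
    unfolding mu_r_def ..
  ultimately have "mu_r r s V E \<in> ?S" "f_r r s V E \<le> mu_r r s V E"
    using Max_in[of ?S] Max_ge[of ?S] by auto
  moreover have "0 < f_r r s V E"
    using assms(1,3,5) \<open>finite E\<close> by (simp add: f_r_def card_gt_0_iff)
  ultimately obtain V' E' where "V' \<subseteq> V" "E' \<subseteq> E" "\<forall>e\<in>E'. e \<subseteq> V'"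
    "mu_r r s V E = f_r r s V' E'" "0 < mu_r r s V E"
    by auto
  moreover have "E' \<noteq> {}"
    using calculation(4,5) by (auto simp: f_r_def)
  ultimately show ?thesis
    using that by blast
qed

theorem corollary3:
  fixes r s :: nat and VH :: "'a set" and EH :: "'a set set"
    and St :: strategy and t :: "nat \<Rightarrow> nat"
  assumes "1 \<le> r" and "r \<le> s"
    and "finite VH" and "card VH \<ge> s"
    and "\<forall>e\<in>EH. e \<subseteq> VH \<and> card e = s"
    and "EH \<noteq> {}"
    and "valid_strategy r s St"
    and "(\<lambda>n. real (t n)) \<in> o(\<lambda>n. real n powr (real r - 1 / mu_r r s VH EH))"
  shows "(\<lambda>n. measure_pmf.prob (semi_random_history r St n (t n))
             {h. contains_copy n (edges_of h) VH EH}) \<longlonglongrightarrow> 0"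
proof -
  define a where "a = real r - 1 / mu_r r s VH EH"
  obtain V E where sub: "V \<subseteq> VH" "E \<subseteq> EH" "E \<noteq> {}" "\<forall>e\<in>E. e \<subseteq> V"
    and mu: "mu_r r s VH EH = f_r r s V E" "0 < mu_r r s VH EH"
    using densest_subgraph[of r VH s EH] assms(1,3-6) by blast
  define C where "C = step_factor (card E) r s"
  define P where "P n = measure_pmf.prob (semi_random_history r St n (t n))
    {h. contains_copy n (edges_of h) VH EH}" for n
  define B where "B n = (C * (real (t n) / real n powr a)) ^ card E" for n
  have "f_r r s V E \<noteq> 0"
    using mu by linarith
  then have "card E \<noteq> 0" "real (card V) - real s + real r \<noteq> 0"
    unfolding f_r_def by auto
  then have exponent: "real (card E) * real r - (real (card V) - real s + real r) = real (card E) * a"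
    using mu unfolding a_def f_r_def by (auto simp: field_simps)
  have bound: "P n \<le> B n" if "n \<ge> s + 2 * r" for n
  proof -
    have "P n \<le> measure_pmf.prob (semi_random_history r St n (t n))
        {h. contains_copy n (edges_of h) V E}"
      unfolding P_def using contains_copy_subgraph[OF _ sub(1,2)]
      by (intro measure_pmf.finite_measure_mono) auto
    also have "\<dots> \<le> (C * real (t n)) ^ card E / real n powr (real (card E) * a)"
      using prob_contains_copy_le[OF assms(7,1,2) _ _ finite_subset[OF sub(1) assms(3)] sub(3,4)] that
      unfolding C_def exponent by simp
    also have "\<dots> = B n"
      unfolding B_def using that assms(1)
      by (simp add: power_divide power_mult_distrib powr_power mult.commute)
    finally show ?thesis .
  qed
  have "B \<longlonglongrightarrow> 0"
  proof -
    have "(\<lambda>n. C * (real (t n) / real n powr a)) \<longlonglongrightarrow> 0"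
      using tendsto_mult_right_zero[OF smalloD_tendsto[OF assms(8)]] unfolding a_def .
    then have "B \<longlonglongrightarrow> 0 ^ card E"
      unfolding B_def by (rule tendsto_power)
    then show ?thesis
      using \<open>card E \<noteq> 0\<close> by (simp only: zero_power gr0I)
  qed
  then have "P \<longlonglongrightarrow> 0"
    using bound
    by (intro tendsto_sandwich[OF _ _ tendsto_const, where g = P and h = B])
       (auto simp: P_def eventually_at_top_linorder)
  then show ?thesis
    unfolding P_def .
qed

end
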